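(* Let $\mathcal A$ be finite, $r,\hat r:\mathcal A\to[0,1]$, $\eta>0$, and $\pi^{\mathrm{ref}}\in\Delta(\mathcal A)$ with $\pi^{\mathrm{ref}}(a)>0$ for all $a$. Suppose $\hat\pi\in\arg\max_{\pi\in\Delta(\mathcal A)}J(\pi;\hat r)$. Then there exists $\bar u\in[0,1]$ such that $$\mathrm{SubOpt}(\hat\pi)=\frac\eta2\left(\mathbb E_{a\sim\pi_{\bar u}}\Big[\frac{\pi_{\bar u}(a)}{\pi^{\mathrm{ref}}(a)}(r(a)-\hat r(a))^2\Big]-\frac{\Big(\sum_a\frac{\pi_{\bar u}(a)^2}{\pi^{\mathrm{ref}}(a)}(r(a)-\hat r(a))\Big)^2}{\sum_a\frac{\pi_{\bar u}(a)^2}{\pi^{\mathrm{ref}}(a)}}\right),$$ where $\pi_{\bar u}$ is the maximizer of $J(\cdot;r_{\bar u})$ over $\Delta(\mathcal A)$ with $r_{\bar u}=(1-\bar u)r+\bar u\hat r$. In particular, $$\mathrm{SubOpt}(\hat\pi)\le\frac\eta2\,\mathbb E_{a\sim\pi_{\bar u}}\Big[\frac{\pi_{\bar u}(a)}{\pi^{\mathrm{ref}}(a)}(r(a)-\hat r(a))^2\Big].$$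
   Context: For $f:\mathcal A\to\mathbb R$, $J(\pi;f)=\sum_af(a)\pi(a)-\eta^{-1}\mathrm{KL}(\pi^{\mathrm{ref}}\|\pi)$, where $\mathrm{KL}(P\|Q)=\sum_aP(a)\log(P(a)/Q(a))$. $\pi^*$ is the (unique) maximizer of $J(\cdot;r)$ over $\Delta(\mathcal A)$, and $\mathrm{SubOpt}(\pi)=J(\pi^*;r)-J(\pi;r)$. *)

theory Defs
  imports "HOL-Analysis.Analysis"
begin

definition policy_simplex :: "('a::finite \<Rightarrow> real) set" where
  "policy_simplex = {p. (\<forall>a. 0 \<le> p a) \<and> (\<Sum>a\<in>UNIV. p a) = 1}"

(* KL(P||Q) = sum_a P a log(P a / Q a), with 0 log 0 = 0 and value +infinity
   if some P a > 0 while Q a = 0. *)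
definition KL :: "('a::finite \<Rightarrow> real) \<Rightarrow> ('a \<Rightarrow> real) \<Rightarrow> ereal" where
  "KL P Q = (if (\<exists>a. 0 < P a \<and> Q a = 0) then \<infinity>
             else ereal (\<Sum>a\<in>UNIV. P a * ln (P a / Q a)))"

definition J :: "real \<Rightarrow> ('a::finite \<Rightarrow> real) \<Rightarrow> ('a \<Rightarrow> real) \<Rightarrow> ('a \<Rightarrow> real) \<Rightarrow> ereal" where
  "J \<eta> \<pi>ref \<pi> f = ereal (\<Sum>a\<in>UNIV. f a * \<pi> a) - ereal (1 / \<eta>) * KL \<pi>ref \<pi>"

definition is_maximizer :: "real \<Rightarrow> ('a::finite \<Rightarrow> real) \<Rightarrow> ('a \<Rightarrow> real) \<Rightarrow> ('a \<Rightarrow> real) \<Rightarrow> bool" where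
  "is_maximizer \<eta> \<pi>ref f \<pi> \<longleftrightarrow> \<pi> \<in> policy_simplex \<and> (\<forall>\<pi>'\<in>policy_simplex. J \<eta> \<pi>ref \<pi>' f \<le> J \<eta> \<pi>ref \<pi> f)"

definition opt_policy :: "real \<Rightarrow> ('a::finite \<Rightarrow> real) \<Rightarrow> ('a \<Rightarrow> real) \<Rightarrow> ('a \<Rightarrow> real)" where
  "opt_policy \<eta> \<pi>ref f = (THE \<pi>. is_maximizer \<eta> \<pi>ref f \<pi>)"

definition SubOpt :: "real \<Rightarrow> ('a::finite \<Rightarrow> real) \<Rightarrow> ('a \<Rightarrow> real) \<Rightarrow> ('a \<Rightarrow> real) \<Rightarrow> ereal" where
  "SubOpt \<eta> \<pi>ref r \<pi> = J \<eta> \<pi>ref (opt_policy \<eta> \<pi>ref r) r - J \<eta> \<pi>ref \<pi> r"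

end

theory Submission
  imports Defs
begin

(*
  Since the regulariser is KL(\<pi>ref || \<pi>), stationarity of J(.; f) on the simplex gives the
  maximiser \<pi>\<^sub>f a = \<pi>ref a / (\<eta> (\<lambda> - f a)), where \<lambda> > max f is fixed by normalisation, and
  J(q; f) - J(\<pi>\<^sub>f; f) = \<eta>\<^sup>-\<^sup>1 \<Sum>\<^sub>a \<pi>ref a (ln x\<^sub>a - (x\<^sub>a - 1)) with x\<^sub>a = q a / \<pi>\<^sub>f a, which is
  negative unless q = \<pi>\<^sub>f.

  Along the path of rewards r + u d with d = rhat - r, the normaliser \<lambda>(u) and hence the
  policy \<pi>\<^sub>u are differentiable, and G(u) = J(\<pi>\<^sub>u; r) satisfies G'(u) = - u \<eta> V(u), where V(u)
  is the variance of d under the weights \<pi>\<^sub>u\<^sup>2 / \<pi>ref, scaled by their total mass. Hence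
  SubOpt(\<pi>hat) = G(0) - G(1), and Cauchy's mean value theorem against u\<^sup>2 turns this into
  \<eta> V(u) / 2 for some u in (0, 1).
*)

(* Stationarity of J(.; f) - l (\<Sum>\<pi> - 1) reads f a + \<pi>ref a / (\<eta> \<pi> a) = l. *)
definition kl_policy :: "real \<Rightarrow> ('a::finite \<Rightarrow> real) \<Rightarrow> ('a \<Rightarrow> real) \<Rightarrow> real \<Rightarrow> 'a \<Rightarrow> real" where
  "kl_policy \<eta> \<pi>ref f l a = \<pi>ref a / (\<eta> * (l - f a))"

definition kl_normaliser :: "real \<Rightarrow> ('a::finite \<Rightarrow> real) \<Rightarrow> ('a \<Rightarrow> real) \<Rightarrow> real \<Rightarrow> bool" where
  "kl_normaliser \<eta> \<pi>ref f l \<longleftrightarrow> (\<forall>a. f a < l) \<and> (\<Sum>a\<in>UNIV. kl_policy \<eta> \<pi>ref f l a) = 1"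

lemma kl_policy_pos:
  assumes "\<eta> > 0" "\<pi>ref a > 0" "f a < l"
  shows "kl_policy \<eta> \<pi>ref f l a > 0"
  using assms by (simp add: kl_policy_def)

lemma kl_normaliser_exists:
  fixes f \<pi>ref :: "'a::finite \<Rightarrow> real"
  assumes eta: "\<eta> > 0" and pos: "\<forall>a. \<pi>ref a > 0" and sum1: "(\<Sum>a\<in>UNIV. \<pi>ref a) = 1"
  shows "\<exists>l. kl_normaliser \<eta> \<pi>ref f l"
proof -
  define M where "M = Max (range f)"
  have "M \<in> range f"
    unfolding M_def by (rule Max_in) auto
  then obtain b where b: "f b = M" by auto
  have fM: "f a \<le> M" for a
    unfolding M_def by simp
  define h where "h l = (\<Sum>a\<in>UNIV. kl_policy \<eta> \<pi>ref f l a)" for l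
  (* At lo the b-th term alone is 1; at hi each term is at most \<pi>ref a. *)
  define lo where "lo = M + \<pi>ref b / \<eta>"
  define hi where "hi = M + 1 / \<eta>"
  have "\<pi>ref b \<le> 1"
    using member_le_sum[of b UNIV \<pi>ref] pos sum1 by (simp add: less_imp_le)
  then have "lo \<le> hi"
    unfolding lo_def hi_def using eta by (simp add: divide_right_mono)
  have "M < lo"
    unfolding lo_def using pos eta by simp
  then have above: "f a < l" if "lo \<le> l" for a l
    using fM[of a] that by linarith
  have "1 \<le> h lo"
  proof -
    have "1 = kl_policy \<eta> \<pi>ref f lo b"
      unfolding kl_policy_def lo_def b using pos[rule_format, of b] eta by simp
    also have "\<dots> \<le> h lo"
      unfolding h_def using above eta pos
      by (intro member_le_sum less_imp_le kl_policy_pos) auto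
    finally show ?thesis .
  qed
  moreover have "h hi \<le> 1"
  proof -
    have "kl_policy \<eta> \<pi>ref f hi a \<le> \<pi>ref a" for a
    proof -
      have "1 \<le> \<eta> * (hi - f a)"
        unfolding hi_def using fM[of a] eta by (simp add: field_simps)
      then show ?thesis
        unfolding kl_policy_def using pos[rule_format, of a] by (simp add: divide_le_eq mult_le_cancel_left1)
    qed
    then have "h hi \<le> (\<Sum>a\<in>UNIV. \<pi>ref a)"
      unfolding h_def by (intro sum_mono)
    then show ?thesis using sum1 by simp
  qed
  moreover have "isCont h l" if "lo \<le> l" for l
    unfolding h_def kl_policy_def using above[OF that] eta
    by (intro continuous_intros) auto
  ultimately obtain l where "lo \<le> l" "h l = 1"
    using IVT2[of h hi 1 lo] \<open>lo \<le> hi\<close> by auto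
  then show ?thesis
    unfolding kl_normaliser_def h_def using above by blast
qed

definition J_real :: "real \<Rightarrow> ('a::finite \<Rightarrow> real) \<Rightarrow> ('a \<Rightarrow> real) \<Rightarrow> ('a \<Rightarrow> real) \<Rightarrow> real" where
  "J_real \<eta> \<pi>ref \<pi> f = (\<Sum>a\<in>UNIV. f a * \<pi> a) - 1 / \<eta> * (\<Sum>a\<in>UNIV. \<pi>ref a * ln (\<pi>ref a / \<pi> a))"

lemma J_eq_J_real:
  assumes "\<forall>a. \<pi> a > 0"
  shows "J \<eta> \<pi>ref \<pi> f = ereal (J_real \<eta> \<pi>ref \<pi> f)"
  using assms unfolding J_def KL_def J_real_def by (auto simp: less_le)

lemma J_eq_MInfty:
  assumes "\<pi> a = 0" "\<pi>ref a > 0" "\<eta> > 0"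
  shows "J \<eta> \<pi>ref \<pi> f = -\<infinity>"
  using assms unfolding J_def KL_def by auto

lemma J_real_gap_kl_policy:
  fixes f \<pi>ref q :: "'a::finite \<Rightarrow> real"
  assumes eta: "\<eta> > 0" and pos: "\<forall>a. \<pi>ref a > 0" and norm: "kl_normaliser \<eta> \<pi>ref f l"
    and q_pos: "\<forall>a. q a > 0" and q_sum: "(\<Sum>a\<in>UNIV. q a) = 1"
  defines "\<pi> \<equiv> kl_policy \<eta> \<pi>ref f l"
  shows "J_real \<eta> \<pi>ref q f - J_real \<eta> \<pi>ref \<pi> f
     = 1 / \<eta> * (\<Sum>a\<in>UNIV. \<pi>ref a * (ln (q a / \<pi> a) - (q a / \<pi> a - 1)))"
proof -
  have f_below: "f a < l" for a
    using norm unfolding kl_normaliser_def by blast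
  have \<pi>_pos: "\<pi> a > 0" for a
    unfolding \<pi>_def using eta pos f_below by (intro kl_policy_pos) auto
  have \<pi>_sum: "(\<Sum>a\<in>UNIV. \<pi> a) = 1"
    using norm unfolding kl_normaliser_def \<pi>_def by blast
  have f_eq: "f a = l - \<pi>ref a / (\<eta> * \<pi> a)" for a
    unfolding \<pi>_def kl_policy_def using eta pos[rule_format, of a] f_below[of a] by (simp add: field_simps)
  have "f a * q a - f a * \<pi> a = l * (q a - \<pi> a) - 1 / \<eta> * (\<pi>ref a * (q a / \<pi> a - 1))" for a
    unfolding f_eq using eta \<pi>_pos[of a] by (simp add: field_simps)
  then have "(\<Sum>a\<in>UNIV. f a * q a) - (\<Sum>a\<in>UNIV. f a * \<pi> a)
      = l * ((\<Sum>a\<in>UNIV. q a) - (\<Sum>a\<in>UNIV. \<pi> a)) - 1 / \<eta> * (\<Sum>a\<in>UNIV. \<pi>ref a * (q a / \<pi> a - 1))"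
    by (simp add: sum_subtractf[symmetric] sum_distrib_left)
  then have linear_terms: "(\<Sum>a\<in>UNIV. f a * q a) - (\<Sum>a\<in>UNIV. f a * \<pi> a)
      = - (1 / \<eta> * (\<Sum>a\<in>UNIV. \<pi>ref a * (q a / \<pi> a - 1)))"
    using q_sum \<pi>_sum by simp
  have "\<pi>ref a * ln (\<pi>ref a / \<pi> a) - \<pi>ref a * ln (\<pi>ref a / q a) = \<pi>ref a * ln (q a / \<pi> a)" for a
    using pos[rule_format, of a] q_pos[rule_format, of a] \<pi>_pos[of a]
    by (simp add: ln_div right_diff_distrib)
  then have "(\<Sum>a\<in>UNIV. \<pi>ref a * ln (\<pi>ref a / \<pi> a)) - (\<Sum>a\<in>UNIV. \<pi>ref a * ln (\<pi>ref a / q a))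
      = (\<Sum>a\<in>UNIV. \<pi>ref a * ln (q a / \<pi> a))"
    by (simp add: sum_subtractf[symmetric])
  then have log_terms: "1 / \<eta> * (\<Sum>a\<in>UNIV. \<pi>ref a * ln (\<pi>ref a / \<pi> a))
      - 1 / \<eta> * (\<Sum>a\<in>UNIV. \<pi>ref a * ln (\<pi>ref a / q a))
      = 1 / \<eta> * (\<Sum>a\<in>UNIV. \<pi>ref a * ln (q a / \<pi> a))"
    by (simp only: right_diff_distrib[symmetric])
  have "(\<Sum>a\<in>UNIV. \<pi>ref a * (ln (q a / \<pi> a) - (q a / \<pi> a - 1)))
      = (\<Sum>a\<in>UNIV. \<pi>ref a * ln (q a / \<pi> a)) - (\<Sum>a\<in>UNIV. \<pi>ref a * (q a / \<pi> a - 1))"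
    by (simp add: right_diff_distrib sum_subtractf)
  then show ?thesis
    unfolding J_real_def using linear_terms log_terms by (simp only: right_diff_distrib[of "1 / \<eta>"])
qed

lemma J_less_J_kl_policy:
  fixes f \<pi>ref q :: "'a::finite \<Rightarrow> real"
  assumes eta: "\<eta> > 0" and pos: "\<forall>a. \<pi>ref a > 0" and norm: "kl_normaliser \<eta> \<pi>ref f l"
    and q: "q \<in> policy_simplex" "q \<noteq> kl_policy \<eta> \<pi>ref f l"
  shows "J \<eta> \<pi>ref q f < J \<eta> \<pi>ref (kl_policy \<eta> \<pi>ref f l) f"
proof -
  define \<pi> where "\<pi> = kl_policy \<eta> \<pi>ref f l"
  have \<pi>_pos: "\<forall>a. \<pi> a > 0"
    unfolding \<pi>_def using eta pos norm by (auto intro: kl_policy_pos simp: kl_normaliser_def)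
  show ?thesis
  proof (cases "\<forall>a. q a > 0")
    case True
    have term_le: "\<pi>ref a * (ln (q a / \<pi> a) - (q a / \<pi> a - 1)) \<le> 0" for a
      using ln_le_minus_one[of "q a / \<pi> a"] True \<pi>_pos pos[rule_format, of a]
      by (intro mult_nonneg_nonpos) auto
    obtain b where "q b \<noteq> \<pi> b"
      using q(2) unfolding \<pi>_def by blast
    then have "ln (q b / \<pi> b) \<noteq> q b / \<pi> b - 1"
      using ln_eq_minus_one[of "q b / \<pi> b"] True \<pi>_pos by auto
    then have "\<pi>ref b * (ln (q b / \<pi> b) - (q b / \<pi> b - 1)) < 0"
      using ln_le_minus_one[of "q b / \<pi> b"] True \<pi>_pos pos by (simp add: mult_pos_neg)
    then have "(\<Sum>a\<in>UNIV. \<pi>ref a * (ln (q a / \<pi> a) - (q a / \<pi> a - 1))) < (\<Sum>a\<in>(UNIV::'a set). 0)"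
      using term_le by (intro sum_strict_mono_ex1) auto
    then have "1 / \<eta> * (\<Sum>a\<in>UNIV. \<pi>ref a * (ln (q a / \<pi> a) - (q a / \<pi> a - 1))) < 0"
      using eta by (intro mult_pos_neg) auto
    moreover have "(\<Sum>a\<in>UNIV. q a) = 1"
      using q(1) unfolding policy_simplex_def by blast
    ultimately have "J_real \<eta> \<pi>ref q f < J_real \<eta> \<pi>ref \<pi> f"
      using J_real_gap_kl_policy[OF eta pos norm True] unfolding \<pi>_def by linarith
    then show ?thesis
      unfolding J_eq_J_real[OF True] J_eq_J_real[OF \<pi>_pos, unfolded \<pi>_def] \<pi>_def by simp
  next
    case False
    then obtain a where "q a = 0"
      using q(1) unfolding policy_simplex_def by (auto simp: not_less intro: antisym)
    then show ?thesis
      using J_eq_MInfty[of q a] pos eta J_eq_J_real[OF \<pi>_pos] unfolding \<pi>_def by simp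
  qed
qed

lemma is_maximizer_iff_kl_policy:
  fixes f \<pi>ref :: "'a::finite \<Rightarrow> real"
  assumes eta: "\<eta> > 0" and pos: "\<forall>a. \<pi>ref a > 0" and norm: "kl_normaliser \<eta> \<pi>ref f l"
  shows "is_maximizer \<eta> \<pi>ref f q \<longleftrightarrow> q = kl_policy \<eta> \<pi>ref f l"
proof -
  have "kl_policy \<eta> \<pi>ref f l \<in> policy_simplex"
    using norm eta pos unfolding policy_simplex_def kl_normaliser_def
    by (auto intro: less_imp_le kl_policy_pos)
  then show ?thesis
    using J_less_J_kl_policy[OF eta pos norm] unfolding is_maximizer_def
    by (metis less_imp_le not_le)
qed

lemma opt_policy_eq_kl_policy:
  fixes f \<pi>ref :: "'a::finite \<Rightarrow> real"
  assumes "\<eta> > 0" "\<forall>a. \<pi>ref a > 0" "kl_normaliser \<eta> \<pi>ref f l"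
  shows "opt_policy \<eta> \<pi>ref f = kl_policy \<eta> \<pi>ref f l"
  unfolding opt_policy_def is_maximizer_iff_kl_policy[OF assms] by simp

lemma abs_weighted_sum_le:
  fixes c g :: "'b \<Rightarrow> real"
  assumes "\<forall>b\<in>A. 0 \<le> c b" and "\<forall>b\<in>A. \<bar>g b\<bar> \<le> D"
  shows "\<bar>\<Sum>b\<in>A. c b * g b\<bar> \<le> D * (\<Sum>b\<in>A. c b)"
proof -
  have "\<bar>\<Sum>b\<in>A. c b * g b\<bar> \<le> (\<Sum>b\<in>A. c b * \<bar>g b\<bar>)"
    using sum_abs[of "\<lambda>b. c b * g b" A] assms(1) by (simp add: abs_mult)
  also have "\<dots> \<le> (\<Sum>b\<in>A. c b * D)"
    using assms by (intro sum_mono mult_left_mono) auto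
  finally show ?thesis
    by (simp add: sum_distrib_left mult.commute)
qed

lemma cauchy_mean_value_square:
  fixes G V :: "real \<Rightarrow> real"
  assumes G_deriv: "\<And>u. DERIV G u :> - u * V u"
  shows "\<exists>z. 0 < z \<and> z < 1 \<and> G 0 - G 1 = V z / 2"
proof -
  have square_deriv: "DERIV (\<lambda>u. u\<^sup>2) u :> 2 * u" for u :: real
    by (auto intro!: derivative_eq_intros)
  have "\<exists>z. 0 < z \<and> z < 1 \<and> (G 1 - G 0) * (2 * z) = (1\<^sup>2 - 0\<^sup>2) * (- z * V z)"
    by (rule GMVT'[where g' = "\<lambda>u. 2 * u" and f' = "\<lambda>u. - u * V u"])
      (auto intro: DERIV_isCont G_deriv[unfolded mult_minus_left] square_deriv)
  then obtain z where "0 < z" "z < 1" "z * (2 * (G 0 - G 1) - V z) = 0"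
    by (auto simp: algebra_simps)
  then show ?thesis
    by auto
qed

(* The variance of g under the probability weights w / \<Sum>w, multiplied by \<Sum>w. *)
definition scaled_variance :: "('a::finite \<Rightarrow> real) \<Rightarrow> ('a \<Rightarrow> real) \<Rightarrow> real" where
  "scaled_variance w g = (\<Sum>a\<in>UNIV. w a * g a ^ 2) - (\<Sum>a\<in>UNIV. w a * g a)\<^sup>2 / (\<Sum>a\<in>UNIV. w a)"

lemma scaled_variance_uminus: "scaled_variance w (\<lambda>a. - g a) = scaled_variance w g"
  by (simp add: scaled_variance_def sum_negf)

locale reward_path =
  fixes \<eta> :: real and \<pi>ref r d :: "'a::finite \<Rightarrow> real" and lam :: "real \<Rightarrow> real"
  assumes eta_pos: "\<eta> > 0" and ref_pos: "\<And>a. \<pi>ref a > 0"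
    and normaliser: "\<And>u. kl_normaliser \<eta> \<pi>ref (\<lambda>a. r a + u * d a) (lam u)"
begin

definition slack :: "real \<Rightarrow> 'a \<Rightarrow> real" where
  "slack u a = lam u - (r a + u * d a)"

definition policy :: "real \<Rightarrow> 'a \<Rightarrow> real" where
  "policy u = kl_policy \<eta> \<pi>ref (\<lambda>a. r a + u * d a) (lam u)"

definition weight :: "real \<Rightarrow> 'a \<Rightarrow> real" where
  "weight u a = policy u a ^ 2 / \<pi>ref a"

definition lam_deriv :: "real \<Rightarrow> real" where
  "lam_deriv u = (\<Sum>b\<in>UNIV. weight u b * d b) / (\<Sum>b\<in>UNIV. weight u b)"

definition policy_deriv :: "real \<Rightarrow> 'a \<Rightarrow> real" where
  "policy_deriv u a = \<eta> * weight u a * (d a - lam_deriv u)"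

lemma slack_pos: "slack u a > 0"
  using normaliser[of u] unfolding kl_normaliser_def slack_def by simp

lemma policy_eq: "policy u a = \<pi>ref a / (\<eta> * slack u a)"
  unfolding policy_def kl_policy_def slack_def ..

lemma policy_pos: "policy u a > 0"
  unfolding policy_eq using eta_pos ref_pos[of a] slack_pos[of u a] by simp

lemma sum_policy: "(\<Sum>a\<in>UNIV. policy u a) = 1"
  using normaliser[of u] unfolding kl_normaliser_def policy_def by blast

lemma weight_pos: "weight u a > 0"
  unfolding weight_def using policy_pos[of u a] ref_pos[of a] by simp

lemma lam_increment:
  fixes z u :: real
  defines "c \<equiv> \<lambda>b. \<pi>ref b / (slack z b * slack u b)"
  shows "(lam z - lam u) * (\<Sum>b\<in>UNIV. c b) = (z - u) * (\<Sum>b\<in>UNIV. c b * d b)"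
proof -
  have "policy z b - policy u b = 1 / \<eta> * ((z - u) * (c b * d b) - (lam z - lam u) * c b)" for b
  proof -
    have "policy z b - policy u b = 1 / \<eta> * c b * (slack u b - slack z b)"
      unfolding policy_eq c_def using eta_pos slack_pos[of z b] slack_pos[of u b]
      by (simp add: field_simps)
    also have "slack u b - slack z b = (z - u) * d b - (lam z - lam u)"
      unfolding slack_def by (simp add: algebra_simps)
    finally show ?thesis
      by (simp add: algebra_simps)
  qed
  then have "(\<Sum>b\<in>UNIV. policy z b - policy u b)
      = 1 / \<eta> * ((z - u) * (\<Sum>b\<in>UNIV. c b * d b) - (lam z - lam u) * (\<Sum>b\<in>UNIV. c b))"
    by (simp add: sum_subtractf sum_distrib_left sum_divide_distrib[symmetric])
  moreover have "(\<Sum>b\<in>UNIV. policy z b - policy u b) = 0"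
    by (simp add: sum_subtractf sum_policy)
  ultimately show ?thesis
    using eta_pos by simp
qed

lemma lam_lipschitz: "(\<Sum>b\<in>UNIV. \<bar>d b\<bar>)-lipschitz_on UNIV lam"
proof (rule lipschitz_onI)
  fix z u :: real
  define c where "c b = \<pi>ref b / (slack z b * slack u b)" for b
  have c_pos: "c b > 0" for b
    unfolding c_def using ref_pos[of b] slack_pos[of z b] slack_pos[of u b] by simp
  then have C_pos: "(\<Sum>b\<in>UNIV. c b) > 0"
    by (simp add: sum_pos)
  have "\<bar>lam z - lam u\<bar> * (\<Sum>b\<in>UNIV. c b) = \<bar>(lam z - lam u) * (\<Sum>b\<in>UNIV. c b)\<bar>"
    using C_pos by (simp add: abs_mult)
  also have "\<dots> = \<bar>z - u\<bar> * \<bar>\<Sum>b\<in>UNIV. c b * d b\<bar>"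
    unfolding c_def lam_increment abs_mult ..
  also have "\<dots> \<le> \<bar>z - u\<bar> * ((\<Sum>b\<in>UNIV. \<bar>d b\<bar>) * (\<Sum>b\<in>UNIV. c b))"
    using c_pos by (intro mult_left_mono abs_weighted_sum_le) (auto intro: less_imp_le member_le_sum)
  also have "\<dots> = ((\<Sum>b\<in>UNIV. \<bar>d b\<bar>) * \<bar>z - u\<bar>) * (\<Sum>b\<in>UNIV. c b)"
    by (simp only: mult_ac)
  finally show "dist (lam z) (lam u) \<le> (\<Sum>b\<in>UNIV. \<bar>d b\<bar>) * dist z u"
    using C_pos unfolding dist_real_def by (rule mult_right_le_imp_le)
qed (simp add: sum_nonneg)

lemma isCont_lam: "isCont lam u"
  using lipschitz_on_continuous_within[OF lam_lipschitz] by simp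

lemma isCont_slack: "isCont (\<lambda>z. slack z a) u"
  unfolding slack_def by (intro continuous_intros isCont_lam)

lemma DERIV_lam: "DERIV lam u :> lam_deriv u"
proof -
  define c where "c z b = \<pi>ref b / (slack z b * slack u b)" for z b
  (* Caratheodory: the difference quotient of lam at u is a c-weighted mean of d, continuous in z. *)
  define g where "g z = (\<Sum>b\<in>UNIV. c z b * d b) / (\<Sum>b\<in>UNIV. c z b)" for z
  have C_pos: "(\<Sum>b\<in>UNIV. c z b) > 0" for z
    unfolding c_def using ref_pos slack_pos by (simp add: sum_pos)
  have "lam z - lam u = g z * (z - u)" for z
    using lam_increment[of z u] C_pos[of z] unfolding g_def c_def by (simp add: field_simps)
  moreover have "isCont g u"
    unfolding g_def c_def using C_pos[of u] slack_pos[of u, THEN less_imp_neq]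
    by (intro continuous_intros isCont_slack) (auto simp: c_def)
  moreover have "g u = lam_deriv u"
  proof -
    have "c u b = \<eta>\<^sup>2 * weight u b" for b
      unfolding c_def weight_def policy_eq using eta_pos ref_pos[of b] slack_pos[of u b]
      by (simp add: field_simps power2_eq_square)
    then show ?thesis
      unfolding g_def lam_deriv_def using eta_pos
      by (simp add: mult.assoc sum_distrib_left[symmetric])
  qed
  ultimately show ?thesis
    unfolding CARAT_DERIV by blast
qed

lemma DERIV_slack: "DERIV (\<lambda>u. slack u a) u :> lam_deriv u - d a"
  unfolding slack_def by (auto intro!: derivative_eq_intros DERIV_lam)

lemma DERIV_policy: "DERIV (\<lambda>u. policy u a) u :> policy_deriv u a"
proof -
  have "DERIV (\<lambda>u. \<pi>ref a / (\<eta> * slack u a)) u :> policy_deriv u a"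
    using eta_pos slack_pos[of u a] ref_pos[of a]
    by (auto intro!: derivative_eq_intros DERIV_slack
        simp: policy_deriv_def weight_def policy_eq field_simps power2_eq_square)
  then show ?thesis
    unfolding policy_eq .
qed

lemma sum_weight_pos: "(\<Sum>a\<in>UNIV. weight u a) > 0"
  using weight_pos by (simp add: sum_pos)

lemma sum_policy_deriv: "(\<Sum>a\<in>UNIV. policy_deriv u a) = 0"
proof -
  have "(\<Sum>a\<in>UNIV. policy_deriv u a)
      = \<eta> * ((\<Sum>a\<in>UNIV. weight u a * d a) - lam_deriv u * (\<Sum>a\<in>UNIV. weight u a))"
    unfolding policy_deriv_def by (simp add: algebra_simps sum_subtractf sum_distrib_left)
  then show ?thesis
    unfolding lam_deriv_def using sum_weight_pos[of u] by simp
qed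

lemma sum_policy_deriv_times_d: "(\<Sum>a\<in>UNIV. d a * policy_deriv u a) = \<eta> * scaled_variance (weight u) d"
proof -
  have "(\<Sum>a\<in>UNIV. d a * policy_deriv u a)
      = \<eta> * ((\<Sum>a\<in>UNIV. weight u a * d a ^ 2) - lam_deriv u * (\<Sum>a\<in>UNIV. weight u a * d a))"
    unfolding policy_deriv_def by (simp add: algebra_simps power2_eq_square sum_subtractf sum_distrib_left)
  then show ?thesis
    unfolding lam_deriv_def scaled_variance_def by (simp add: power2_eq_square)
qed

lemma J_real_policy:
  "J_real \<eta> \<pi>ref (policy u) r
    = (\<Sum>a\<in>UNIV. r a * policy u a) - 1 / \<eta> * (\<Sum>a\<in>UNIV. \<pi>ref a * ln (\<eta> * slack u a))"
proof -
  have "\<pi>ref a / policy u a = \<eta> * slack u a" for a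
    unfolding policy_eq using eta_pos ref_pos[of a] slack_pos[of u a] by simp
  then show ?thesis
    unfolding J_real_def by simp
qed

lemma DERIV_J_real_policy:
  "DERIV (\<lambda>u. J_real \<eta> \<pi>ref (policy u) r) u :> - u * \<eta> * scaled_variance (weight u) d"
proof -
  have "DERIV (\<lambda>u. ln (\<eta> * slack u a)) u :> (lam_deriv u - d a) / slack u a" for a
    using eta_pos slack_pos[of u a] by (auto intro!: derivative_eq_intros DERIV_slack)
  then have "DERIV (\<lambda>u. J_real \<eta> \<pi>ref (policy u) r) u
      :> (\<Sum>a\<in>UNIV. r a * policy_deriv u a) - 1 / \<eta> * (\<Sum>a\<in>UNIV. \<pi>ref a * ((lam_deriv u - d a) / slack u a))"
    unfolding J_real_policy[abs_def] by (intro DERIV_diff DERIV_cmult DERIV_sum DERIV_policy)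
  moreover have "(\<Sum>a\<in>UNIV. r a * policy_deriv u a) - 1 / \<eta> * (\<Sum>a\<in>UNIV. \<pi>ref a * ((lam_deriv u - d a) / slack u a))
      = (\<Sum>a\<in>UNIV. (lam u - u * d a) * policy_deriv u a)"
  proof -
    (* The entropy term contributes \<Sum> slack * policy_deriv, and r + slack = lam - u d. *)
    have "1 / \<eta> * (\<pi>ref a * ((lam_deriv u - d a) / slack u a)) = - slack u a * policy_deriv u a" for a
      unfolding policy_deriv_def weight_def policy_eq using eta_pos ref_pos[of a] slack_pos[of u a]
      by (simp add: field_simps power2_eq_square)
    then have "r a * policy_deriv u a - 1 / \<eta> * (\<pi>ref a * ((lam_deriv u - d a) / slack u a))
        = (lam u - u * d a) * policy_deriv u a" for a
      by (simp add: slack_def algebra_simps)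
    then show ?thesis
      by (simp add: sum_distrib_left sum_subtractf[symmetric])
  qed
  moreover have "(\<Sum>a\<in>UNIV. (lam u - u * d a) * policy_deriv u a)
      = lam u * (\<Sum>a\<in>UNIV. policy_deriv u a) - u * (\<Sum>a\<in>UNIV. d a * policy_deriv u a)"
    by (simp add: algebra_simps sum_subtractf sum_distrib_left)
  ultimately show ?thesis
    unfolding sum_policy_deriv sum_policy_deriv_times_d by (simp add: mult.assoc)
qed

lemma J_real_policy_mean_value:
  "\<exists>z. 0 < z \<and> z < 1 \<and>
    J_real \<eta> \<pi>ref (policy 0) r - J_real \<eta> \<pi>ref (policy 1) r = \<eta> / 2 * scaled_variance (weight z) d"
  using cauchy_mean_value_square[of "\<lambda>u. J_real \<eta> \<pi>ref (policy u) r" "\<lambda>u. \<eta> * scaled_variance (weight u) d"]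
    DERIV_J_real_policy by (auto simp: mult.assoc)

lemma scaled_variance_weight:
  "scaled_variance (weight u) g
    = (\<Sum>a\<in>UNIV. policy u a * (policy u a / \<pi>ref a * g a ^ 2))
      - (\<Sum>a\<in>UNIV. policy u a ^ 2 / \<pi>ref a * g a)\<^sup>2 / (\<Sum>a\<in>UNIV. policy u a ^ 2 / \<pi>ref a)"
  unfolding scaled_variance_def weight_def by (simp add: power2_eq_square mult.assoc)

end

lemma reward_path_exists:
  fixes \<pi>ref r d :: "'a::finite \<Rightarrow> real"
  assumes "\<eta> > 0" "\<forall>a. \<pi>ref a > 0" "(\<Sum>a\<in>UNIV. \<pi>ref a) = 1"
  shows "\<exists>lam. reward_path \<eta> \<pi>ref r d lam"
proof -
  have "\<forall>u. \<exists>l. kl_normaliser \<eta> \<pi>ref (\<lambda>a. r a + u * d a) l"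
    using kl_normaliser_exists[OF assms] by blast
  then obtain lam where "\<And>u. kl_normaliser \<eta> \<pi>ref (\<lambda>a. r a + u * d a) (lam u)"
    by metis
  then show ?thesis
    using assms by (auto intro!: exI[of _ lam] simp: reward_path_def)
qed

theorem lemma5p2:
  fixes r rhat \<pi>ref \<pi>hat :: "'a::finite \<Rightarrow> real" and \<eta> :: real
  assumes "\<forall>a. 0 \<le> r a \<and> r a \<le> 1"
    and "\<forall>a. 0 \<le> rhat a \<and> rhat a \<le> 1"
    and "\<eta> > 0"
    and "\<pi>ref \<in> policy_simplex"
    and "\<forall>a. \<pi>ref a > 0"
    and "is_maximizer \<eta> \<pi>ref rhat \<pi>hat"
  shows "\<exists>u\<in>{0..1::real}.
    (let p = opt_policy \<eta> \<pi>ref (\<lambda>a. (1 - u) * r a + u * rhat a) in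
      SubOpt \<eta> \<pi>ref r \<pi>hat =
        ereal (\<eta> / 2 * ((\<Sum>a\<in>UNIV. p a * (p a / \<pi>ref a * (r a - rhat a)^2))
          - (\<Sum>a\<in>UNIV. p a ^ 2 / \<pi>ref a * (r a - rhat a))^2
            / (\<Sum>a\<in>UNIV. p a ^ 2 / \<pi>ref a)))
      \<and> SubOpt \<eta> \<pi>ref r \<pi>hat
          \<le> ereal (\<eta> / 2 * (\<Sum>a\<in>UNIV. p a * (p a / \<pi>ref a * (r a - rhat a)^2))))"
proof -
  define d where "d a = rhat a - r a" for a
  have path: "(\<lambda>a. (1 - u) * r a + u * rhat a) = (\<lambda>a. r a + u * d a)" for u
    by (auto simp: d_def algebra_simps)
  have "(\<Sum>a\<in>UNIV. \<pi>ref a) = 1"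
    using assms(4) unfolding policy_simplex_def by simp
  then obtain lam where "reward_path \<eta> \<pi>ref r d lam"
    using reward_path_exists assms(3,5) by blast
  then interpret reward_path \<eta> \<pi>ref r d lam .
  have opt: "opt_policy \<eta> \<pi>ref (\<lambda>a. (1 - u) * r a + u * rhat a) = policy u" for u
    unfolding path policy_def using opt_policy_eq_kl_policy eta_pos ref_pos normaliser by blast
  have "is_maximizer \<eta> \<pi>ref (\<lambda>a. r a + 1 * d a) \<pi>hat"
    using assms(6) path[of 1] by simp
  then have "\<pi>hat = policy 1"
    using is_maximizer_iff_kl_policy[OF eta_pos _ normaliser] ref_pos unfolding policy_def by blast
  then have "SubOpt \<eta> \<pi>ref r \<pi>hat = ereal (J_real \<eta> \<pi>ref (policy 0) r - J_real \<eta> \<pi>ref (policy 1) r)"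
    using opt[of 0] unfolding SubOpt_def by (simp add: J_eq_J_real policy_pos)
  moreover obtain z where "0 < z" "z < 1"
    "J_real \<eta> \<pi>ref (policy 0) r - J_real \<eta> \<pi>ref (policy 1) r = \<eta> / 2 * scaled_variance (weight z) d"
    using J_real_policy_mean_value by blast
  moreover have "scaled_variance (weight z) d = scaled_variance (weight z) (\<lambda>a. r a - rhat a)"
    using scaled_variance_uminus[of "weight z" "\<lambda>a. r a - rhat a"] by (simp add: d_def[abs_def])
  moreover have "(\<Sum>a\<in>UNIV. policy z a ^ 2 / \<pi>ref a) > 0"
    using sum_weight_pos unfolding weight_def .
  ultimately show ?thesis
    using \<open>0 < \<eta>\<close> \<open>0 < z\<close> \<open>z < 1\<close> unfolding Let_def opt scaled_variance_weight
    by (intro bexI[of _ z]) auto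
qed

end
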